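(* Let $H'=\begin{bmatrix}0\\1\\0\end{bmatrix}$ and $V'=\begin{bmatrix}0&1&0\end{bmatrix}$, and let $\mathcal{C}'=Av_{\mathfrak{P}}(H',V')$. A polyomino $P$ belongs to $\mathcal{C}'$ if and only if every maximal connected set of cells in a row (resp. in a column) of $P$ has a contact with the minimal bounding rectangle of $P$, i.e. contains a cell in the first or last column (resp. in the first or last row) of that rectangle.
   Context: A polyomino is a finite union of unit cells of $\mathbb{Z}\times\mathbb{Z}$ that is connected via edge adjacency, up to translation, identified with the binary matrix of its minimal bounding rectangle (entry $1$ iff the corresponding unit square is a cell). A matrix is a submatrix of another if obtained by deleting rows and/or columns; $Av_{\mathfrak{P}}(\mathcal{M})$ is the set of polyominoes with no submatrix in $\mathcal{M}$. *)

theory Defs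
  imports Main
begin

text \<open>A binary matrix: (number of rows, number of columns, entries).
  Only entries with row index < rows and column index < columns matter.\<close>
type_synonym bmat = "nat \<times> nat \<times> (nat \<Rightarrow> nat \<Rightarrow> bool)"

definition rows :: "bmat \<Rightarrow> nat" where "rows A = fst A"
definition cols :: "bmat \<Rightarrow> nat" where "cols A = fst (snd A)"
definition ent :: "bmat \<Rightarrow> nat \<Rightarrow> nat \<Rightarrow> bool" where "ent A = snd (snd A)"

definition cells :: "bmat \<Rightarrow> (nat \<times> nat) set" where
  "cells A = {(i, j). i < rows A \<and> j < cols A \<and> ent A i j}"

definition adjacent :: "nat \<times> nat \<Rightarrow> nat \<times> nat \<Rightarrow> bool" where
  "adjacent p q \<longleftrightarrow>
     (fst p = fst q \<and> (snd p + 1 = snd q \<or> snd q + 1 = snd p)) \<or>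
     (snd p = snd q \<and> (fst p + 1 = fst q \<or> fst q + 1 = fst p))"

text \<open>A polyomino, identified with the binary matrix of its minimal bounding rectangle:
  nonempty, edge-connected set of cells, and every row and every column of the
  rectangle contains a cell (minimality of the bounding rectangle).\<close>
definition is_polyomino :: "bmat \<Rightarrow> bool" where
  "is_polyomino P \<longleftrightarrow>
     cells P \<noteq> {} \<and>
     (\<forall>i < rows P. \<exists>j < cols P. ent P i j) \<and>
     (\<forall>j < cols P. \<exists>i < rows P. ent P i j) \<and>
     (\<forall>p \<in> cells P. \<forall>q \<in> cells P.
        (\<lambda>x y. x \<in> cells P \<and> y \<in> cells P \<and> adjacent x y)\<^sup>*\<^sup>* p q)"

definition submatrix :: "bmat \<Rightarrow> bmat \<Rightarrow> bool" where
  "submatrix Q A \<longleftrightarrow>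
     (\<exists>r c. strict_mono_on {..<rows Q} r \<and> (\<forall>i < rows Q. r i < rows A) \<and>
            strict_mono_on {..<cols Q} c \<and> (\<forall>j < cols Q. c j < cols A) \<and>
            (\<forall>i < rows Q. \<forall>j < cols Q. ent Q i j = ent A (r i) (c j)))"

definition AvP :: "bmat set \<Rightarrow> bmat set" where
  "AvP Ms = {P. is_polyomino P \<and> (\<forall>Q \<in> Ms. \<not> submatrix Q P)}"

definition H' :: bmat where "H' = (3, 1, \<lambda>i j. i = 1)"
definition V' :: bmat where "V' = (1, 3, \<lambda>i j. j = 1)"

definition row_segment :: "bmat \<Rightarrow> nat \<Rightarrow> nat \<Rightarrow> nat \<Rightarrow> bool" where
  "row_segment P i a b \<longleftrightarrow>
     i < rows P \<and> a \<le> b \<and> b < cols P \<and> (\<forall>j. a \<le> j \<and> j \<le> b \<longrightarrow> ent P i j) \<and>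
     (a = 0 \<or> \<not> ent P i (a - 1)) \<and> (b + 1 = cols P \<or> \<not> ent P i (b + 1))"

definition col_segment :: "bmat \<Rightarrow> nat \<Rightarrow> nat \<Rightarrow> nat \<Rightarrow> bool" where
  "col_segment P j a b \<longleftrightarrow>
     j < cols P \<and> a \<le> b \<and> b < rows P \<and> (\<forall>i. a \<le> i \<and> i \<le> b \<longrightarrow> ent P i j) \<and>
     (a = 0 \<or> \<not> ent P (a - 1) j) \<and> (b + 1 = rows P \<or> \<not> ent P (b + 1) j)"

end

theory Submission
  imports Defs
begin

text \<open>Both conditions are one-dimensional. An occurrence of \<open>V'\<close> is a row with a 1 strictly
  between two 0s; growing the run of 1s around the middle entry until it meets 0s on both sides
  yields a maximal row segment touching neither the first nor the last column. Conversely, such a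
  segment together with its two neighbouring 0s is an occurrence of \<open>V'\<close>. Columns and \<open>H'\<close>
  are symmetric.\<close>

definition has_010 :: "(nat \<Rightarrow> bool) \<Rightarrow> nat \<Rightarrow> bool" where
  "has_010 f n \<longleftrightarrow> (\<exists>x y z. x < y \<and> y < z \<and> z < n \<and> \<not> f x \<and> f y \<and> \<not> f z)"

lemma run_extends_down:
  fixes f :: "nat \<Rightarrow> bool"
  assumes "f m" "\<not> f l" "l < m"
  obtains a where "l < a" "a \<le> m" "\<forall>k. a \<le> k \<and> k \<le> m \<longrightarrow> f k" "\<not> f (a - 1)"
proof
  define P where "P k \<longleftrightarrow> k < m \<and> \<not> f k" for k
  define g where "g = (GREATEST k. P k)"
  have bounded: "\<forall>k. P k \<longrightarrow> k \<le> m" unfolding P_def by simp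
  have "P l" unfolding P_def using assms by simp
  then have g: "P g" "l \<le> g"
    using GreatestI_nat[of P l m] Greatest_le_nat[of P l m] bounded unfolding g_def by auto
  have after_g: "f k" if "g < k" "k < m" for k
    using Greatest_le_nat[of P k m] bounded that unfolding g_def P_def by fastforce
  show "\<forall>k. Suc g \<le> k \<and> k \<le> m \<longrightarrow> f k"
  proof (intro allI impI)
    fix k assume "Suc g \<le> k \<and> k \<le> m"
    then consider "k = m" | "g < k" "k < m" by linarith
    then show "f k" using assms(1) after_g by cases auto
  qed
  show "l < Suc g" "Suc g \<le> m" "\<not> f (Suc g - 1)" using g unfolding P_def by auto
qed

lemma run_extends_up:
  fixes f :: "nat \<Rightarrow> bool"
  assumes "f m" "\<not> f u" "m < u"
  obtains b where "m \<le> b" "b < u" "\<forall>k. m \<le> k \<and> k \<le> b \<longrightarrow> f k" "\<not> f (b + 1)"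
proof
  define P where "P k \<longleftrightarrow> m < k \<and> \<not> f k" for k
  define s where "s = (LEAST k. P k)"
  have "P u" unfolding P_def using assms by simp
  then have s: "P s" "s \<le> u"
    using LeastI[of P u] Least_le[of P u] unfolding s_def by auto
  have before_s: "f k" if "m < k" "k < s" for k
    using not_less_Least[of k P] that unfolding s_def P_def by blast
  show "\<forall>k. m \<le> k \<and> k \<le> s - 1 \<longrightarrow> f k"
  proof (intro allI impI)
    fix k assume "m \<le> k \<and> k \<le> s - 1"
    then consider "k = m" | "m < k" "k < s" using s(1) unfolding P_def by linarith
    then show "f k" using assms(1) before_s by cases auto
  qed
  show "m \<le> s - 1" "s - 1 < u" "\<not> f (s - 1 + 1)" using s unfolding P_def by auto
qed

lemma has_010_iff_inner_run:
  "has_010 f n \<longleftrightarrow>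
   (\<exists>a b. 0 < a \<and> a \<le> b \<and> b + 1 < n \<and> (\<forall>k. a \<le> k \<and> k \<le> b \<longrightarrow> f k) \<and>
          \<not> f (a - 1) \<and> \<not> f (b + 1))"
proof
  assume "has_010 f n"
  then obtain x y z where xyz: "x < y" "y < z" "z < n" "\<not> f x" "f y" "\<not> f z"
    unfolding has_010_def by blast
  obtain a where a: "x < a" "a \<le> y" "\<forall>k. a \<le> k \<and> k \<le> y \<longrightarrow> f k" "\<not> f (a - 1)"
    using run_extends_down[of f y x] xyz by blast
  obtain b where b: "y \<le> b" "b < z" "\<forall>k. y \<le> k \<and> k \<le> b \<longrightarrow> f k" "\<not> f (b + 1)"
    using run_extends_up[of f y z] xyz by blast
  have "\<forall>k. a \<le> k \<and> k \<le> b \<longrightarrow> f k"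
    using a(3) b(3) by (meson nat_le_linear)
  with a b xyz show "\<exists>a b. 0 < a \<and> a \<le> b \<and> b + 1 < n \<and> (\<forall>k. a \<le> k \<and> k \<le> b \<longrightarrow> f k) \<and>
      \<not> f (a - 1) \<and> \<not> f (b + 1)"
    by (intro exI[of _ a] exI[of _ b]) auto
next
  assume "\<exists>a b. 0 < a \<and> a \<le> b \<and> b + 1 < n \<and> (\<forall>k. a \<le> k \<and> k \<le> b \<longrightarrow> f k) \<and>
      \<not> f (a - 1) \<and> \<not> f (b + 1)"
  then obtain a b where "0 < a" "a \<le> b" "b + 1 < n" "f a" "\<not> f (a - 1)" "\<not> f (b + 1)"
    by auto
  then show "has_010 f n"
    unfolding has_010_def by (intro exI[of _ "a - 1"] exI[of _ a] exI[of _ "b + 1"]) auto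
qed

lemma all_less_3: "(\<forall>i < 3. Q i) \<longleftrightarrow> Q (0::nat) \<and> Q 1 \<and> Q 2"
  by (auto simp: numeral_3_eq_3 numeral_2_eq_2 less_Suc_eq)

lemma strict_mono_on_less_3:
  "strict_mono_on {..<3} r \<longleftrightarrow> r (0::nat) < r 1 \<and> r 1 < (r 2 :: nat)"
  by (auto simp: strict_mono_on_def all_less_3 numeral_3_eq_3 numeral_2_eq_2 less_Suc_eq)

lemma strict_mono_on_singleton: "strict_mono_on {a :: 'a :: preorder} f"
  by (simp add: strict_mono_on_def)

lemma submatrix_H'_iff:
  "submatrix H' P \<longleftrightarrow> (\<exists>j < cols P. has_010 (\<lambda>i. ent P i j) (rows P))"
proof -
  have "submatrix H' P \<longleftrightarrow> (\<exists>(r :: nat \<Rightarrow> nat) (c :: nat \<Rightarrow> nat). r 0 < r 1 \<and> r 1 < r 2 \<and>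
      r 0 < rows P \<and> r 1 < rows P \<and> r 2 < rows P \<and> c 0 < cols P \<and>
      \<not> ent P (r 0) (c 0) \<and> ent P (r 1) (c 0) \<and> \<not> ent P (r 2) (c 0))"
    unfolding submatrix_def H'_def rows_def cols_def ent_def
    by (simp add: lessThan_Suc strict_mono_on_singleton strict_mono_on_less_3 all_less_3)
  also have "\<dots> \<longleftrightarrow> (\<exists>j < cols P. has_010 (\<lambda>i. ent P i j) (rows P))"
    unfolding has_010_def
  proof (intro iffI; elim exE conjE)
    fix r c :: "nat \<Rightarrow> nat"
    assume "r 0 < r 1" "r 1 < r 2" "r 2 < rows P" "c 0 < cols P"
      "\<not> ent P (r 0) (c 0)" "ent P (r 1) (c 0)" "\<not> ent P (r 2) (c 0)"
    then show "\<exists>j<cols P. \<exists>x y z. x < y \<and> y < z \<and> z < rows P \<and>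
        \<not> ent P x j \<and> ent P y j \<and> \<not> ent P z j"
      by blast
  next
    fix j x y z
    assume "j < cols P" "x < y" "y < z" "z < rows P" "\<not> ent P x j" "ent P y j" "\<not> ent P z j"
    then show "\<exists>(r :: nat \<Rightarrow> nat) (c :: nat \<Rightarrow> nat). r 0 < r 1 \<and> r 1 < r 2 \<and>
        r 0 < rows P \<and> r 1 < rows P \<and> r 2 < rows P \<and> c 0 < cols P \<and>
        \<not> ent P (r 0) (c 0) \<and> ent P (r 1) (c 0) \<and> \<not> ent P (r 2) (c 0)"
      by (intro exI[of _ "\<lambda>i. if i = 0 then x else if i = 1 then y else z"] exI[of _ "\<lambda>_. j"])
        simp
  qed
  finally show ?thesis .
qed

lemma submatrix_V'_iff:
  "submatrix V' P \<longleftrightarrow> (\<exists>i < rows P. has_010 (ent P i) (cols P))"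
proof -
  have "submatrix V' P \<longleftrightarrow> (\<exists>(r :: nat \<Rightarrow> nat) (c :: nat \<Rightarrow> nat). r 0 < rows P \<and>
      c 0 < c 1 \<and> c 1 < c 2 \<and> c 0 < cols P \<and> c 1 < cols P \<and> c 2 < cols P \<and>
      \<not> ent P (r 0) (c 0) \<and> ent P (r 0) (c 1) \<and> \<not> ent P (r 0) (c 2))"
    unfolding submatrix_def V'_def rows_def cols_def ent_def
    by (simp add: lessThan_Suc strict_mono_on_singleton strict_mono_on_less_3 all_less_3)
  also have "\<dots> \<longleftrightarrow> (\<exists>i < rows P. has_010 (ent P i) (cols P))"
    unfolding has_010_def
  proof (intro iffI; elim exE conjE)
    fix r c :: "nat \<Rightarrow> nat"
    assume "c 0 < c 1" "c 1 < c 2" "c 2 < cols P" "r 0 < rows P"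
      "\<not> ent P (r 0) (c 0)" "ent P (r 0) (c 1)" "\<not> ent P (r 0) (c 2)"
    then show "\<exists>i<rows P. \<exists>x y z. x < y \<and> y < z \<and> z < cols P \<and>
        \<not> ent P i x \<and> ent P i y \<and> \<not> ent P i z"
      by blast
  next
    fix i x y z
    assume "i < rows P" "x < y" "y < z" "z < cols P" "\<not> ent P i x" "ent P i y" "\<not> ent P i z"
    then show "\<exists>(r :: nat \<Rightarrow> nat) (c :: nat \<Rightarrow> nat). r 0 < rows P \<and>
        c 0 < c 1 \<and> c 1 < c 2 \<and> c 0 < cols P \<and> c 1 < cols P \<and> c 2 < cols P \<and>
        \<not> ent P (r 0) (c 0) \<and> ent P (r 0) (c 1) \<and> \<not> ent P (r 0) (c 2)"
      by (intro exI[of _ "\<lambda>_. i"] exI[of _ "\<lambda>j. if j = 0 then x else if j = 1 then y else z"])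
        simp
  qed
  finally show ?thesis .
qed

lemma inner_col_segment_iff_has_010:
  "(\<exists>a b. col_segment P j a b \<and> a \<noteq> 0 \<and> b + 1 \<noteq> rows P) \<longleftrightarrow>
   j < cols P \<and> has_010 (\<lambda>i. ent P i j) (rows P)"
  (is "?segment \<longleftrightarrow> _")
proof
  assume ?segment
  then obtain a b where "col_segment P j a b" "a \<noteq> 0" "b + 1 \<noteq> rows P" by blast
  then show "j < cols P \<and> has_010 (\<lambda>i. ent P i j) (rows P)"
    unfolding has_010_iff_inner_run col_segment_def
    by (intro conjI exI[of _ a] exI[of _ b]) auto
next
  assume "j < cols P \<and> has_010 (\<lambda>i. ent P i j) (rows P)"
  then obtain a b where "j < cols P" "0 < a" "a \<le> b" "b + 1 < rows P"
    "\<forall>k. a \<le> k \<and> k \<le> b \<longrightarrow> ent P k j" "\<not> ent P (a - 1) j" "\<not> ent P (b + 1) j"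
    unfolding has_010_iff_inner_run by blast
  then show ?segment
    unfolding col_segment_def by (intro exI[of _ a] exI[of _ b]) auto
qed

lemma inner_row_segment_iff_has_010:
  "(\<exists>a b. row_segment P i a b \<and> a \<noteq> 0 \<and> b + 1 \<noteq> cols P) \<longleftrightarrow>
   i < rows P \<and> has_010 (ent P i) (cols P)"
  (is "?segment \<longleftrightarrow> _")
proof
  assume ?segment
  then obtain a b where "row_segment P i a b" "a \<noteq> 0" "b + 1 \<noteq> cols P" by blast
  then show "i < rows P \<and> has_010 (ent P i) (cols P)"
    unfolding has_010_iff_inner_run row_segment_def
    by (intro conjI exI[of _ a] exI[of _ b]) auto
next
  assume "i < rows P \<and> has_010 (ent P i) (cols P)"
  then obtain a b where "i < rows P" "0 < a" "a \<le> b" "b + 1 < cols P"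
    "\<forall>k. a \<le> k \<and> k \<le> b \<longrightarrow> ent P i k" "\<not> ent P i (a - 1)" "\<not> ent P i (b + 1)"
    unfolding has_010_iff_inner_run by blast
  then show ?segment
    unfolding row_segment_def by (intro exI[of _ a] exI[of _ b]) auto
qed

theorem proposition18:
  assumes "is_polyomino P"
  shows "P \<in> AvP {H', V'} \<longleftrightarrow>
    (\<forall>i a b. row_segment P i a b \<longrightarrow> a = 0 \<or> b + 1 = cols P) \<and>
    (\<forall>j a b. col_segment P j a b \<longrightarrow> a = 0 \<or> b + 1 = rows P)"
proof -
  have "submatrix H' P \<longleftrightarrow> (\<exists>j a b. col_segment P j a b \<and> a \<noteq> 0 \<and> b + 1 \<noteq> rows P)"
    using submatrix_H'_iff inner_col_segment_iff_has_010 by blast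
  moreover have "submatrix V' P \<longleftrightarrow> (\<exists>i a b. row_segment P i a b \<and> a \<noteq> 0 \<and> b + 1 \<noteq> cols P)"
    using submatrix_V'_iff inner_row_segment_iff_has_010 by blast
  ultimately show ?thesis
    using assms unfolding AvP_def by blast
qed

end
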